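(* Let $\alpha>0$ and let $\tilde\psi_\ell,\tilde\psi_g\in C^2\big((\alpha,\infty)\times(0,\infty)\big)$ be functions of $(v,\theta)$. Set $\tilde p_i=-\partial_v\tilde\psi_i$ and $\tilde\eta_i=-\partial_\theta\tilde\psi_i$ for $i\in\{\ell,g\}$. Let $\rho_\ell>0$ and $\theta_b>0$ be such that $v_\ell:=1/\rho_\ell=v_\ell^*(\theta_b)$ is the saturated liquid volume at temperature $\theta_b$, and let $v_g^*:=v_g^*(\theta_b)$ be the corresponding saturated gas volume; that is, $\alpha<v_\ell<v_g^*$ and \[ \tilde p_\ell(v_\ell,\theta_b)=\tilde p_g(v_g^*,\theta_b)=\frac{\tilde\psi_\ell(v_\ell,\theta_b)-\tilde\psi_g(v_g^*,\theta_b)}{v_g^*-v_\ell}. \] For $\theta>0$, $v>\alpha$ with $v\ne v_\ell$, and $Z\in\mathbf{R}$ define \begin{align*} f_1(\theta,v,Z)&=\tilde p_\ell(v_\ell,\theta)-Z(v-v_\ell)-\frac{1}{v-v_\ell}\big(\tilde\psi_\ell(v_\ell,\theta)-\tilde\psi_g(v,\theta)\big),\\ f_2(\theta,v,Z)&=\tilde p_g(v,\theta)+Z(v-v_\ell)-\frac{1}{v-v_\ell}\big(\tilde\psi_\ell(v_\ell,\theta)-\tilde\psi_g(v,\theta)\big). \end{align*} Assume \[ \partial_v\tilde\eta_\ell(v_\ell,\theta_b)>\frac{\tilde\eta_g(v_g^*,\theta_b)-\tilde\eta_\ell(v_\ell,\theta_b)}{v_g^*-v_\ell},\qquad \partial_v\tilde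 p_g(v_g^*,\theta_b)<0 . \] Then for all sufficiently small $Z$ there is a unique $(v,\theta)$ near $(v_g^*,\theta_b)$ such that $f_1(\theta,v,Z)=0$ and $f_2(\theta,v,Z)=0$. Moreover, the resulting map $Z\mapsto\theta$ is strictly increasing.
   Context: $\tilde\psi_\ell$ and $\tilde\psi_g$ are the mass specific Helmholtz energies of the liquid and gas phase written as functions of the mass specific volume $v=1/\rho$ and the temperature $\theta$; $\tilde p_i$ is the pressure and $\tilde\eta_i$ the mass specific entropy. The displayed condition defining $v_\ell^*(\theta_b)$, $v_g^*(\theta_b)$ expresses that these are the contact points of the bitangent line to the graphs of $\tilde\psi_\ell(\cdot,\theta_b)$ and $\tilde\psi_g(\cdot,\theta_b)$ (equal slopes $-\tilde p$ and the line through both points). The equations $f_1=f_2=0$ with $Z=j_\Gamma^2/2$ are the momentum balance $\tilde p_\ell-\tilde p_g=j_\Gamma^2(v-v_\ell)$ and the Gibbs–Thomson relation $\tilde\psi_g(v,\theta)-\tilde\psi_\ell(v_\ell,\theta)+(v-v_\ell)\frac{\tilde p_\ell+\tilde p_g}{2}=0$ at a flat liquid–gas interface with phase flux $j_\Gamma$, where $\theta$ is the interface temperature and $v=1/\rho_g$ the gas specific volume. *)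

theory Defs
  imports "HOL-Analysis.Analysis"
begin

text \<open>Functions of (v, theta), written curried: f v theta.\<close>

definition dv :: "(real \<Rightarrow> real \<Rightarrow> real) \<Rightarrow> real \<Rightarrow> real \<Rightarrow> real" where
  "dv f v \<theta> = deriv (\<lambda>x. f x \<theta>) v"

definition dth :: "(real \<Rightarrow> real \<Rightarrow> real) \<Rightarrow> real \<Rightarrow> real \<Rightarrow> real" where
  "dth f v \<theta> = deriv (\<lambda>y. f v y) \<theta>"

definition C1_on :: "(real \<Rightarrow> real \<Rightarrow> real) \<Rightarrow> (real \<times> real) set \<Rightarrow> bool" where
  "C1_on f S \<longleftrightarrow>
     (\<forall>v \<theta>. (v, \<theta>) \<in> S \<longrightarrow> (\<lambda>x. f x \<theta>) differentiable (at v) \<and> (\<lambda>y. f v y) differentiable (at \<theta>)) \<and>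
     continuous_on S (case_prod f) \<and>
     continuous_on S (case_prod (dv f)) \<and>
     continuous_on S (case_prod (dth f))"

definition C2_on :: "(real \<Rightarrow> real \<Rightarrow> real) \<Rightarrow> (real \<times> real) set \<Rightarrow> bool" where
  "C2_on f S \<longleftrightarrow> C1_on f S \<and> C1_on (dv f) S \<and> C1_on (dth f) S"

definition phase_dom :: "real \<Rightarrow> (real \<times> real) set" where
  "phase_dom \<alpha> = {\<alpha><..} \<times> {0<..}"

definition pres :: "(real \<Rightarrow> real \<Rightarrow> real) \<Rightarrow> real \<Rightarrow> real \<Rightarrow> real" where
  "pres \<psi> v \<theta> = - dv \<psi> v \<theta>"

definition entr :: "(real \<Rightarrow> real \<Rightarrow> real) \<Rightarrow> real \<Rightarrow> real \<Rightarrow> real" where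
  "entr \<psi> v \<theta> = - dth \<psi> v \<theta>"

definition f1 :: "(real \<Rightarrow> real \<Rightarrow> real) \<Rightarrow> (real \<Rightarrow> real \<Rightarrow> real) \<Rightarrow> real \<Rightarrow> real \<Rightarrow> real \<Rightarrow> real \<Rightarrow> real" where
  "f1 \<psi>l \<psi>g vl \<theta> v Z = pres \<psi>l vl \<theta> - Z * (v - vl) - (\<psi>l vl \<theta> - \<psi>g v \<theta>) / (v - vl)"

definition f2 :: "(real \<Rightarrow> real \<Rightarrow> real) \<Rightarrow> (real \<Rightarrow> real \<Rightarrow> real) \<Rightarrow> real \<Rightarrow> real \<Rightarrow> real \<Rightarrow> real \<Rightarrow> real" where
  "f2 \<psi>l \<psi>g vl \<theta> v Z = pres \<psi>g v \<theta> + Z * (v - vl) - (\<psi>l vl \<theta> - \<psi>g v \<theta>) / (v - vl)"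

end

theory Submission
  imports Defs
begin

text \<open>Write \<open>vl = 1 / \<rho>l\<close> and let \<open>Q v \<theta> = (\<psi>l vl \<theta> - \<psi>g v \<theta>) / (v - vl)\<close> be the chord
  pressure, so that \<open>f1 = P1 - Z (v - vl)\<close> and \<open>f2 = P2 + Z (v - vl)\<close> with
  \<open>P1 = p\<^sub>l(vl, \<theta>) - Q\<close> and \<open>P2 = p\<^sub>g(v, \<theta>) - Q\<close>. At the saturation point \<open>(vg, \<theta>b)\<close> both
  residuals vanish, \<open>\<partial>\<^sub>vP1 = 0\<close>, \<open>\<partial>\<^sub>\<theta>P1 > 0\<close> is the entropy hypothesis (via the Maxwell
  relation) and \<open>\<partial>\<^sub>vP2 < 0\<close> is the pressure hypothesis. Hence near that point, uniformly for
  small \<open>Z\<close>, the Jacobian in \<open>(v, \<theta>)\<close> is triangular up to a small error with diagonal entries of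
  fixed sign. Instead of an implicit function theorem we use the mean value theorem directly: the
  increments between two solutions satisfy a diagonally dominant linear system, which gives
  uniqueness and, because \<open>v - vl > 0\<close>, strict growth of \<open>\<theta>\<close> in \<open>Z\<close>. Existence follows by
  solving the first equation for \<open>\<theta>\<close> with the intermediate value theorem and then the second one
  along the resulting curve, on which it is strictly decreasing.\<close>

section \<open>Partial derivatives and the mean value theorem\<close>

definition has_partials ::
    "(real \<Rightarrow> real \<Rightarrow> real) \<Rightarrow> (real \<Rightarrow> real \<Rightarrow> real) \<Rightarrow> (real \<Rightarrow> real \<Rightarrow> real) \<Rightarrow> real \<Rightarrow> real \<Rightarrow> bool" where
  "has_partials f fv ft v \<theta> \<longleftrightarrow>
     ((\<lambda>x. f x \<theta>) has_real_derivative fv v \<theta>) (at v) \<and> ((\<lambda>y. f v y) has_real_derivative ft v \<theta>) (at \<theta>)"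

lemma real_mvt_segment:
  fixes f f' :: "real \<Rightarrow> real"
  assumes "\<And>z. z \<in> closed_segment x y \<Longrightarrow> (f has_real_derivative f' z) (at z)"
  shows "\<exists>z \<in> closed_segment x y. f y - f x = (y - x) * f' z"
proof (cases x y rule: linorder_cases)
  case less
  then obtain z where "x < z" "z < y" "f y - f x = (y - x) * f' z"
    using MVT2[of x y f f'] assms by (auto simp: closed_segment_eq_real_ivl)
  then show ?thesis using less by (auto simp: closed_segment_eq_real_ivl)
next
  case greater
  then obtain z where "y < z" "z < x" "f x - f y = (x - y) * f' z"
    using MVT2[of y x f f'] assms by (auto simp: closed_segment_eq_real_ivl)
  then show ?thesis
    using greater by (intro bexI[of _ z]) (auto simp: closed_segment_eq_real_ivl algebra_simps)
qed auto

lemma has_partials_increment: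
  assumes partials: "\<And>v \<theta>. v \<in> I \<Longrightarrow> \<theta> \<in> J \<Longrightarrow> has_partials f fv ft v \<theta>"
    and "convex I" "convex J" "v1 \<in> I" "v2 \<in> I" "\<theta>1 \<in> J" "\<theta>2 \<in> J"
  shows "\<exists>\<xi>\<in>I. \<exists>\<zeta>\<in>J. f v2 \<theta>2 - f v1 \<theta>1 = (v2 - v1) * fv \<xi> \<theta>1 + (\<theta>2 - \<theta>1) * ft v2 \<zeta>"
proof -
  have segI: "closed_segment v1 v2 \<subseteq> I" and segJ: "closed_segment \<theta>1 \<theta>2 \<subseteq> J"
    using assms(2-) by (simp_all add: closed_segment_subset)
  obtain \<xi> where \<xi>: "\<xi> \<in> closed_segment v1 v2" "f v2 \<theta>1 - f v1 \<theta>1 = (v2 - v1) * fv \<xi> \<theta>1"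
    using real_mvt_segment[of v1 v2 "\<lambda>x. f x \<theta>1" "\<lambda>x. fv x \<theta>1"] partials segI \<open>\<theta>1 \<in> J\<close>
    unfolding has_partials_def by blast
  obtain \<zeta> where \<zeta>: "\<zeta> \<in> closed_segment \<theta>1 \<theta>2" "f v2 \<theta>2 - f v2 \<theta>1 = (\<theta>2 - \<theta>1) * ft v2 \<zeta>"
    using real_mvt_segment[of \<theta>1 \<theta>2 "\<lambda>y. f v2 y" "\<lambda>y. ft v2 y"] partials segJ \<open>v2 \<in> I\<close>
    unfolding has_partials_def by blast
  show ?thesis
    using \<xi> \<zeta> segI segJ by (intro bexI[of _ \<xi>] bexI[of _ \<zeta>]) auto
qed

lemma derivative_ge_imp_root_in_cball:
  fixes g g' :: "real \<Rightarrow> real"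
  assumes deriv: "\<And>x. x \<in> cball x0 s \<Longrightarrow> (g has_real_derivative g' x) (at x)"
    and ge: "\<And>x. x \<in> cball x0 s \<Longrightarrow> a \<le> g' x"
    and small: "\<bar>g x0\<bar> \<le> a * s" and "0 \<le> s"
  shows "\<exists>x\<in>cball x0 s. g x = 0"
proof -
  have ends: "x0 - s \<in> cball x0 s" "x0 + s \<in> cball x0 s" "x0 \<in> cball x0 s"
    using \<open>0 \<le> s\<close> by (auto simp: dist_real_def)
  have segs: "closed_segment x0 (x0 + s) \<subseteq> cball x0 s" "closed_segment x0 (x0 - s) \<subseteq> cball x0 s"
    using ends by (simp_all add: closed_segment_subset)
  obtain z where "z \<in> cball x0 s" "g (x0 + s) - g x0 = s * g' z"
    using real_mvt_segment[of x0 "x0 + s" g g'] deriv segs(1) by force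
  then have right: "0 \<le> g (x0 + s)"
    using ge[of z] small \<open>0 \<le> s\<close> mult_left_mono[of a "g' z" s] by (auto simp: abs_le_iff mult.commute)
  obtain z' where "z' \<in> cball x0 s" "g (x0 - s) - g x0 = - s * g' z'"
    using real_mvt_segment[of x0 "x0 - s" g g'] deriv segs(2) by force
  then have left: "g (x0 - s) \<le> 0"
    using ge[of z'] small \<open>0 \<le> s\<close> mult_left_mono[of a "g' z'" s] by (auto simp: abs_le_iff mult.commute)
  have "continuous_on {x0 - s..x0 + s} g"
    by (intro continuous_at_imp_continuous_on ballI DERIV_isCont[OF deriv]) (auto simp: dist_real_def)
  then obtain x where "x0 - s \<le> x" "x \<le> x0 + s" "g x = 0"
    using IVT'[of g "x0 - s" 0 "x0 + s"] left right \<open>0 \<le> s\<close> by auto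
  then show ?thesis by (auto simp: dist_real_def)
qed

section \<open>Nearly triangular systems\<close>

text \<open>Here \<open>u\<close> and \<open>w\<close> are the increments of \<open>v\<close> and \<open>\<theta>\<close> between two points and
  \<open>A, e1, e2, C\<close> the partial derivatives \<open>\<partial>\<^sub>\<theta>H1, \<partial>\<^sub>vH1, \<partial>\<^sub>vH2, \<partial>\<^sub>\<theta>H2\<close>
  at the intermediate points given by the mean value theorem, and \<open>c\<close> and \<open>-c\<close> are the
  increments of \<open>H1\<close> and \<open>H2\<close>.\<close>

lemma triangular_increments_trivial:
  fixes a b \<epsilon> M A C e1 e2 u w c :: real
  assumes "0 < a" "0 < b" "2 * \<epsilon> \<le> b" "4 * (\<epsilon> * M) \<le> a * b"
    and "a \<le> A" "\<bar>e1\<bar> \<le> \<epsilon>" "e2 \<le> -b" "\<bar>C\<bar> \<le> M"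
    and eq1: "u * e1 + w * A = c" and eq2: "u * e2 + w * C = - c"
    and "0 \<le> c" "w \<le> 0"
  shows "c = 0 \<and> w = 0 \<and> u = 0"
proof -
  have "b * \<bar>u\<bar> \<le> \<bar>e2\<bar> * \<bar>u\<bar>"
    using assms(2,7) by (intro mult_right_mono) auto
  also have "\<dots> = \<bar>c + w * C\<bar>"
  proof -
    have "e2 * u = - (c + w * C)" using eq2 by (simp add: algebra_simps)
    then show ?thesis by (metis abs_minus_cancel abs_mult)
  qed
  also have "\<dots> \<le> c + \<bar>w\<bar> * \<bar>C\<bar>"
    using abs_triangle_ineq[of c "w * C"] \<open>0 \<le> c\<close> by (simp add: abs_mult)
  also have "\<dots> \<le> c + M * \<bar>w\<bar>"
    using \<open>\<bar>C\<bar> \<le> M\<close> by (simp add: mult_right_mono mult.commute)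
  finally have u_bound: "b * \<bar>u\<bar> \<le> c + M * \<bar>w\<bar>" .
  have "u * e1 \<le> \<epsilon> * \<bar>u\<bar>"
  proof -
    have "u * e1 \<le> \<bar>u\<bar> * \<bar>e1\<bar>" by (simp add: abs_mult[symmetric])
    also have "\<dots> \<le> \<bar>u\<bar> * \<epsilon>" using \<open>\<bar>e1\<bar> \<le> \<epsilon>\<close> by (simp add: mult_left_mono)
    finally show ?thesis by (simp add: mult.commute)
  qed
  moreover have "w * A \<le> a * w"
    using \<open>a \<le> A\<close> \<open>w \<le> 0\<close> by (metis mult.commute mult_right_mono_neg)
  ultimately have "c \<le> \<epsilon> * \<bar>u\<bar> + a * w" using eq1 by linarith
  then have "b * c \<le> \<epsilon> * (b * \<bar>u\<bar>) + a * b * w"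
    using \<open>0 < b\<close> mult_left_mono[of c "\<epsilon> * \<bar>u\<bar> + a * w" b] by (simp add: algebra_simps)
  also have "\<dots> \<le> \<epsilon> * (c + M * \<bar>w\<bar>) + a * b * w"
    using u_bound \<open>\<bar>e1\<bar> \<le> \<epsilon>\<close> by (simp add: mult_left_mono)
  also have "\<dots> \<le> b / 2 * c - a * b / 4 * w + a * b * w"
    using assms(3,4) \<open>0 \<le> c\<close> \<open>w \<le> 0\<close> mult_right_mono[of "2 * \<epsilon>" b c]
      mult_right_mono[of "4 * (\<epsilon> * M)" "a * b" "- w"]
    by (simp add: algebra_simps)
  finally have key: "b / 2 * c \<le> 3 / 4 * (a * b) * w" by simp
  have ab: "0 < a * b" using assms(1,2) by simp
  have "3 / 4 * (a * b) * w \<le> 0"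
    using ab \<open>w \<le> 0\<close> by (simp add: mult_nonneg_nonpos)
  moreover have "0 \<le> b / 2 * c"
    using \<open>0 < b\<close> \<open>0 \<le> c\<close> by simp
  ultimately have "b / 2 * c = 0" "3 / 4 * (a * b) * w = 0"
    using key by linarith+
  then have "c = 0" "w = 0"
    using \<open>0 < a\<close> \<open>0 < b\<close> by simp_all
  moreover have "u = 0"
    using u_bound \<open>0 < b\<close> calculation by (simp add: mult_le_0_iff)
  ultimately show ?thesis by simp
qed

locale triangular_system =
  fixes H1 H2 H1v H1t H2v H2t :: "real \<Rightarrow> real \<Rightarrow> real"
    and v0 t0 r a b \<epsilon> M N :: real
  assumes partials: "\<And>v \<theta>. v \<in> cball v0 r \<Longrightarrow> \<theta> \<in> cball t0 r \<Longrightarrow>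
      has_partials H1 H1v H1t v \<theta> \<and> has_partials H2 H2v H2t v \<theta>"
    and bounds: "\<And>v \<theta>. v \<in> cball v0 r \<Longrightarrow> \<theta> \<in> cball t0 r \<Longrightarrow>
      a \<le> H1t v \<theta> \<and> \<bar>H1v v \<theta>\<bar> \<le> \<epsilon> \<and> H2v v \<theta> \<le> -b \<and> \<bar>H2v v \<theta>\<bar> \<le> N \<and> \<bar>H2t v \<theta>\<bar> \<le> M"
    and a_pos: "0 < a" and b_pos: "0 < b"
    and eps_le: "2 * \<epsilon> \<le> a" "2 * \<epsilon> \<le> b"
    and eps_M_le: "4 * (\<epsilon> * M) \<le> a * b"
begin

lemma box_increments:
  assumes "v1 \<in> cball v0 r" "v2 \<in> cball v0 r" "\<theta>1 \<in> cball t0 r" "\<theta>2 \<in> cball t0 r"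
  shows "\<exists>\<xi>\<in>cball v0 r. \<exists>\<zeta>\<in>cball t0 r.
           H1 v2 \<theta>2 - H1 v1 \<theta>1 = (v2 - v1) * H1v \<xi> \<theta>1 + (\<theta>2 - \<theta>1) * H1t v2 \<zeta>"
    and "\<exists>\<xi>\<in>cball v0 r. \<exists>\<zeta>\<in>cball t0 r.
           H2 v2 \<theta>2 - H2 v1 \<theta>1 = (v2 - v1) * H2v \<xi> \<theta>1 + (\<theta>2 - \<theta>1) * H2t v2 \<zeta>"
  using assms partials
  by (auto intro!: has_partials_increment[of "cball v0 r" "cball t0 r"])

lemma opposite_increments_trivial:
  assumes pts: "v1 \<in> cball v0 r" "v2 \<in> cball v0 r" "\<theta>1 \<in> cball t0 r" "\<theta>2 \<in> cball t0 r"
    and "H1 v2 \<theta>2 - H1 v1 \<theta>1 = c" "H2 v2 \<theta>2 - H2 v1 \<theta>1 = - c"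
    and "0 \<le> c" "\<theta>2 \<le> \<theta>1"
  shows "c = 0 \<and> \<theta>1 = \<theta>2 \<and> v1 = v2"
proof -
  obtain \<xi> \<zeta> where \<xi>\<zeta>: "\<xi> \<in> cball v0 r" "\<zeta> \<in> cball t0 r"
    "H1 v2 \<theta>2 - H1 v1 \<theta>1 = (v2 - v1) * H1v \<xi> \<theta>1 + (\<theta>2 - \<theta>1) * H1t v2 \<zeta>"
    using box_increments(1)[OF pts] by blast
  obtain \<xi>' \<zeta>' where \<xi>'\<zeta>': "\<xi>' \<in> cball v0 r" "\<zeta>' \<in> cball t0 r"
    "H2 v2 \<theta>2 - H2 v1 \<theta>1 = (v2 - v1) * H2v \<xi>' \<theta>1 + (\<theta>2 - \<theta>1) * H2t v2 \<zeta>'"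
    using box_increments(2)[OF pts] by blast
  have "c = 0 \<and> \<theta>2 - \<theta>1 = 0 \<and> v2 - v1 = 0"
  proof (rule triangular_increments_trivial[OF a_pos b_pos eps_le(2) eps_M_le])
    show "a \<le> H1t v2 \<zeta>" "\<bar>H1v \<xi> \<theta>1\<bar> \<le> \<epsilon>" "H2v \<xi>' \<theta>1 \<le> - b" "\<bar>H2t v2 \<zeta>'\<bar> \<le> M"
      using bounds \<xi>\<zeta> \<xi>'\<zeta>' pts by blast+
  qed (use assms \<xi>\<zeta> \<xi>'\<zeta>' in auto)
  then show ?thesis by simp
qed

lemma zero_unique:
  assumes pts: "v1 \<in> cball v0 r" "v2 \<in> cball v0 r" "\<theta>1 \<in> cball t0 r" "\<theta>2 \<in> cball t0 r"
    and "H1 v1 \<theta>1 = 0" "H2 v1 \<theta>1 = 0" "H1 v2 \<theta>2 = 0" "H2 v2 \<theta>2 = 0"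
  shows "v1 = v2 \<and> \<theta>1 = \<theta>2"
  using opposite_increments_trivial[OF pts, of 0] opposite_increments_trivial[of v2 v1 \<theta>2 \<theta>1 0] assms
  by (cases "\<theta>2 \<le> \<theta>1") auto

lemma H1_theta_increment_bound:
  assumes pts: "v1 \<in> cball v0 r" "v2 \<in> cball v0 r" "\<theta>1 \<in> cball t0 r" "\<theta>2 \<in> cball t0 r"
  shows "a * \<bar>\<theta>2 - \<theta>1\<bar> \<le> \<bar>H1 v2 \<theta>2 - H1 v1 \<theta>1\<bar> + \<epsilon> * \<bar>v2 - v1\<bar>"
proof -
  obtain \<xi> \<zeta> where \<xi>\<zeta>: "\<xi> \<in> cball v0 r" "\<zeta> \<in> cball t0 r"
    "H1 v2 \<theta>2 - H1 v1 \<theta>1 = (v2 - v1) * H1v \<xi> \<theta>1 + (\<theta>2 - \<theta>1) * H1t v2 \<zeta>"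
    using box_increments(1)[OF pts] by blast
  have "a * \<bar>\<theta>2 - \<theta>1\<bar> \<le> \<bar>(\<theta>2 - \<theta>1) * H1t v2 \<zeta>\<bar>"
    using bounds[OF pts(2) \<xi>\<zeta>(2)] a_pos by (simp add: abs_mult mult_right_mono mult.commute)
  also have "\<dots> \<le> \<bar>H1 v2 \<theta>2 - H1 v1 \<theta>1\<bar> + \<bar>v2 - v1\<bar> * \<bar>H1v \<xi> \<theta>1\<bar>"
    using \<xi>\<zeta>(3) abs_triangle_ineq4[of "H1 v2 \<theta>2 - H1 v1 \<theta>1" "(v2 - v1) * H1v \<xi> \<theta>1"]
    by (simp add: abs_mult)
  also have "\<dots> \<le> \<bar>H1 v2 \<theta>2 - H1 v1 \<theta>1\<bar> + \<epsilon> * \<bar>v2 - v1\<bar>"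
    using bounds[OF \<xi>\<zeta>(1) pts(3)] mult_left_mono[of "\<bar>H1v \<xi> \<theta>1\<bar>" \<epsilon> "\<bar>v2 - v1\<bar>"]
    by (simp add: mult.commute)
  finally show ?thesis .
qed

lemma H2_increment_along_H1_zeros:
  assumes pts: "v1 \<in> cball v0 r" "v2 \<in> cball v0 r" "\<theta>1 \<in> cball t0 r" "\<theta>2 \<in> cball t0 r"
    and zeros: "H1 v1 \<theta>1 = 0" "H1 v2 \<theta>2 = 0"
  shows "\<exists>E. E \<le> -b \<and> \<bar>E\<bar> \<le> N \<and> \<bar>H2 v2 \<theta>2 - H2 v1 \<theta>1 - (v2 - v1) * E\<bar> \<le> b / 4 * \<bar>v2 - v1\<bar>"
proof -
  obtain \<xi> \<zeta> where \<xi>\<zeta>: "\<xi> \<in> cball v0 r" "\<zeta> \<in> cball t0 r"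
    "H2 v2 \<theta>2 - H2 v1 \<theta>1 = (v2 - v1) * H2v \<xi> \<theta>1 + (\<theta>2 - \<theta>1) * H2t v2 \<zeta>"
    using box_increments(2)[OF pts] by blast
  have "a * \<bar>\<theta>2 - \<theta>1\<bar> \<le> \<epsilon> * \<bar>v2 - v1\<bar>"
    using H1_theta_increment_bound[OF pts] zeros by simp
  moreover have "0 \<le> M"
    using bounds[OF pts(1,3)] abs_ge_zero order_trans by blast
  ultimately have "a * (\<bar>\<theta>2 - \<theta>1\<bar> * M) \<le> \<epsilon> * \<bar>v2 - v1\<bar> * M"
    by (metis mult.assoc mult_right_mono)
  also have "\<dots> \<le> a * (b / 4 * \<bar>v2 - v1\<bar>)"
    using eps_M_le mult_right_mono[of "4 * (\<epsilon> * M)" "a * b" "\<bar>v2 - v1\<bar>"] by (simp add: algebra_simps)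
  finally have "\<bar>\<theta>2 - \<theta>1\<bar> * M \<le> b / 4 * \<bar>v2 - v1\<bar>"
    using a_pos by simp
  moreover have "\<bar>(\<theta>2 - \<theta>1) * H2t v2 \<zeta>\<bar> \<le> \<bar>\<theta>2 - \<theta>1\<bar> * M"
    using bounds[OF pts(2) \<xi>\<zeta>(2)] by (simp add: abs_mult mult_left_mono)
  ultimately show ?thesis
    using bounds[OF \<xi>\<zeta>(1) pts(3)] \<xi>\<zeta>(3) by (intro exI[of _ "H2v \<xi> \<theta>1"]) auto
qed

lemma H2_decreasing_along_H1_zeros:
  assumes pts: "v1 \<in> cball v0 r" "v2 \<in> cball v0 r" "\<theta>1 \<in> cball t0 r" "\<theta>2 \<in> cball t0 r"
    and zeros: "H1 v1 \<theta>1 = 0" "H1 v2 \<theta>2 = 0" and "v1 \<le> v2"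
  shows "H2 v2 \<theta>2 - H2 v1 \<theta>1 \<le> - (3 * b / 4) * (v2 - v1)"
proof -
  obtain E where E: "E \<le> -b" "\<bar>H2 v2 \<theta>2 - H2 v1 \<theta>1 - (v2 - v1) * E\<bar> \<le> b / 4 * \<bar>v2 - v1\<bar>"
    using H2_increment_along_H1_zeros[OF pts zeros] by blast
  have "(v2 - v1) * E \<le> (v2 - v1) * (-b)"
    using E(1) \<open>v1 \<le> v2\<close> by (intro mult_left_mono) auto
  moreover have "H2 v2 \<theta>2 - H2 v1 \<theta>1 - (v2 - v1) * E \<le> b / 4 * (v2 - v1)"
    using abs_le_D1[OF E(2)] \<open>v1 \<le> v2\<close> by simp
  moreover have "- (3 * b / 4) * (v2 - v1) = (v2 - v1) * (-b) + b / 4 * (v2 - v1)"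
    by (simp add: field_simps)
  ultimately show ?thesis
    by linarith
qed

lemma H2_lipschitz_along_H1_zeros:
  assumes pts: "v1 \<in> cball v0 r" "v2 \<in> cball v0 r" "\<theta>1 \<in> cball t0 r" "\<theta>2 \<in> cball t0 r"
    and zeros: "H1 v1 \<theta>1 = 0" "H1 v2 \<theta>2 = 0"
  shows "\<bar>H2 v2 \<theta>2 - H2 v1 \<theta>1\<bar> \<le> (N + b) * \<bar>v2 - v1\<bar>"
proof -
  obtain E where E: "\<bar>E\<bar> \<le> N" "\<bar>H2 v2 \<theta>2 - H2 v1 \<theta>1 - (v2 - v1) * E\<bar> \<le> b / 4 * \<bar>v2 - v1\<bar>"
    using H2_increment_along_H1_zeros[OF pts zeros] by blast
  have "\<bar>(v2 - v1) * E\<bar> \<le> \<bar>v2 - v1\<bar> * N"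
    using E(1) by (simp add: abs_mult mult_left_mono)
  moreover have "\<bar>H2 v2 \<theta>2 - H2 v1 \<theta>1\<bar> \<le> \<bar>H2 v2 \<theta>2 - H2 v1 \<theta>1 - (v2 - v1) * E\<bar> + \<bar>(v2 - v1) * E\<bar>"
    by (metis abs_triangle_ineq diff_add_cancel)
  moreover have "0 \<le> b * \<bar>v2 - v1\<bar>"
    using b_pos by simp
  ultimately show ?thesis
    using E(2) by (simp add: distrib_right mult.commute[of N])
qed

lemma H1_zero_in_theta:
  assumes "0 < s" "s \<le> r" "2 * \<bar>H1 v0 t0\<bar> \<le> a * s" and v: "v \<in> cball v0 s"
  shows "\<exists>\<theta>\<in>cball t0 s. H1 v \<theta> = 0"
proof (rule derivative_ge_imp_root_in_cball)
  have sub: "cball x s \<subseteq> cball x r" for x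
    using \<open>s \<le> r\<close> by (rule subset_cball)
  show "((\<lambda>\<theta>. H1 v \<theta>) has_real_derivative H1t v \<theta>) (at \<theta>)" "a \<le> H1t v \<theta>"
    if "\<theta> \<in> cball t0 s" for \<theta>
    using partials bounds v that sub unfolding has_partials_def by blast+
  have center: "v0 \<in> cball v0 r" "t0 \<in> cball t0 r"
    using \<open>0 < s\<close> \<open>s \<le> r\<close> by auto
  obtain \<xi> \<zeta> where "\<xi> \<in> cball v0 r"
    "H1 v t0 - H1 v0 t0 = (v - v0) * H1v \<xi> t0 + (t0 - t0) * H1t v \<zeta>"
    using box_increments(1)[of v0 v t0 t0] center v sub by blast
  moreover have "\<bar>v - v0\<bar> \<le> s" "\<bar>H1v \<xi> t0\<bar> \<le> \<epsilon>"
    using bounds[of \<xi> t0] calculation(1) center v by (auto simp: dist_real_def)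
  ultimately have "\<bar>H1 v t0 - H1 v0 t0\<bar> \<le> \<epsilon> * s"
    using mult_mono[of "\<bar>v - v0\<bar>" s "\<bar>H1v \<xi> t0\<bar>" \<epsilon>] \<open>0 < s\<close> by (simp add: abs_mult mult.commute)
  then show "\<bar>H1 v t0\<bar> \<le> a * s"
    using assms(3) eps_le(1) \<open>0 < s\<close> mult_right_mono[of "2 * \<epsilon>" a s] by linarith
qed (use \<open>0 < s\<close> in simp)

lemma H2_at_H1_zero_over_center:
  assumes "0 \<le> r" "\<theta> \<in> cball t0 r" "H1 v0 \<theta> = 0"
  shows "a * \<bar>H2 v0 \<theta>\<bar> \<le> a * \<bar>H2 v0 t0\<bar> + M * \<bar>H1 v0 t0\<bar>"
proof -
  have center: "v0 \<in> cball v0 r" "t0 \<in> cball t0 r"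
    using \<open>0 \<le> r\<close> by auto
  have "a * \<bar>\<theta> - t0\<bar> \<le> \<bar>H1 v0 t0\<bar>"
    using H1_theta_increment_bound[OF center(1) center(1) center(2) assms(2)] assms(3) by simp
  moreover have "0 \<le> M"
    using bounds[OF center] abs_ge_zero order_trans by blast
  ultimately have "a * \<bar>\<theta> - t0\<bar> * M \<le> M * \<bar>H1 v0 t0\<bar>"
    by (metis mult.commute mult_right_mono)
  obtain \<zeta> where \<zeta>: "\<zeta> \<in> cball t0 r" "H2 v0 \<theta> - H2 v0 t0 = (\<theta> - t0) * H2t v0 \<zeta>"
    using box_increments(2)[OF center(1) center(1) center(2) assms(2)] by auto
  have "\<bar>(\<theta> - t0) * H2t v0 \<zeta>\<bar> \<le> \<bar>\<theta> - t0\<bar> * M"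
    using bounds[OF center(1) \<zeta>(1)] by (simp add: abs_mult mult_left_mono)
  then have "\<bar>H2 v0 \<theta>\<bar> \<le> \<bar>H2 v0 t0\<bar> + \<bar>\<theta> - t0\<bar> * M"
    using \<zeta>(2) abs_triangle_ineq[of "H2 v0 t0" "(\<theta> - t0) * H2t v0 \<zeta>"] by simp
  then have "a * \<bar>H2 v0 \<theta>\<bar> \<le> a * (\<bar>H2 v0 t0\<bar> + \<bar>\<theta> - t0\<bar> * M)"
    using a_pos by (simp add: mult_left_mono)
  then show ?thesis
    using \<open>a * \<bar>\<theta> - t0\<bar> * M \<le> M * \<bar>H1 v0 t0\<bar>\<close> by (simp add: distrib_left mult.assoc)
qed

lemma exists_zero:
  assumes "0 < s" "s \<le> r"
    and small: "2 * \<bar>H1 v0 t0\<bar> \<le> a * s" "4 * (a * \<bar>H2 v0 t0\<bar> + M * \<bar>H1 v0 t0\<bar>) \<le> 3 * (a * b * s)"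
  shows "\<exists>v\<in>cball v0 s. \<exists>\<theta>\<in>cball t0 s. H1 v \<theta> = 0 \<and> H2 v \<theta> = 0"
proof -
  obtain \<tau> where \<tau>: "\<And>v. v \<in> cball v0 s \<Longrightarrow> \<tau> v \<in> cball t0 s \<and> H1 v (\<tau> v) = 0"
    using H1_zero_in_theta[OF \<open>0 < s\<close> \<open>s \<le> r\<close> small(1)] by metis
  have in_box: "v \<in> cball v0 r" "\<tau> v \<in> cball t0 r" if "v \<in> cball v0 s" for v
    using \<tau>[OF that] that subset_cball[OF \<open>s \<le> r\<close>] by blast+
  define k where "k v = H2 v (\<tau> v)" for v
  have "0 \<le> N"
    using bounds[of v0 t0] \<open>0 < s\<close> \<open>s \<le> r\<close> abs_ge_zero order_trans by fastforce
  have zeros: "v1 \<in> cball v0 r" "v2 \<in> cball v0 r" "\<tau> v1 \<in> cball t0 r" "\<tau> v2 \<in> cball t0 r"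
      "H1 v1 (\<tau> v1) = 0" "H1 v2 (\<tau> v2) = 0"
    if "v1 \<in> cball v0 s" "v2 \<in> cball v0 s" for v1 v2
    using in_box \<tau> that by blast+
  have "(N + b)-lipschitz_on (cball v0 s) k"
    using H2_lipschitz_along_H1_zeros[OF zeros] \<open>0 \<le> N\<close> b_pos
    by (intro lipschitz_onI) (auto simp: k_def dist_real_def abs_minus_commute)
  then have k_cont: "continuous_on {v0 - s..v0 + s} k"
    by (simp add: lipschitz_on_continuous_on cball_eq_atLeastAtMost)
  have ends: "v0 - s \<in> cball v0 s" "v0 \<in> cball v0 s" "v0 + s \<in> cball v0 s"
    using \<open>0 < s\<close> by (auto simp: dist_real_def)
  have "a * \<bar>k v0\<bar> \<le> a * (3 * b * s / 4)"
    using H2_at_H1_zero_over_center[of "\<tau> v0"] in_box(2)[OF ends(2)] \<tau>[OF ends(2)] small(2)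
      \<open>0 < s\<close> \<open>s \<le> r\<close> by (simp add: k_def)
  then have "\<bar>k v0\<bar> \<le> 3 * b * s / 4"
    using a_pos by simp
  then have "k (v0 + s) \<le> 0" "0 \<le> k (v0 - s)"
    using H2_decreasing_along_H1_zeros[OF zeros[of v0 "v0 + s"]]
      H2_decreasing_along_H1_zeros[OF zeros[of "v0 - s" v0]] ends \<open>0 < s\<close>
    by (auto simp: k_def abs_le_iff)
  then obtain v where "v0 - s \<le> v" "v \<le> v0 + s" "k v = 0"
    using IVT2'[of k "v0 + s" 0 "v0 - s"] k_cont \<open>0 < s\<close> by auto
  then show ?thesis
    using \<tau> unfolding k_def by (force simp: dist_real_def)
qed

end

section \<open>Small perturbations near a nondegenerate zero\<close>

definition has_continuous_partials_on ::
    "(real \<Rightarrow> real \<Rightarrow> real) \<Rightarrow> (real \<Rightarrow> real \<Rightarrow> real) \<Rightarrow> (real \<Rightarrow> real \<Rightarrow> real) \<Rightarrow> (real \<times> real) set \<Rightarrow> bool" where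
  "has_continuous_partials_on f fv ft U \<longleftrightarrow>
     (\<forall>(v, \<theta>)\<in>U. has_partials f fv ft v \<theta>) \<and> continuous_on U (case_prod fv) \<and> continuous_on U (case_prod ft)"

lemma cball_Times_cball_subset_ball:
  fixes x y :: real
  assumes "2 * r < d"
  shows "cball x r \<times> cball y r \<subseteq> ball (x, y) d"
proof (rule subsetI, unfold mem_Times_iff mem_cball mem_ball)
  fix p assume p: "dist x (fst p) \<le> r \<and> dist y (snd p) \<le> r"
  have "dist (x, y) p \<le> dist x (fst p) + dist y (snd p)"
    using sqrt_sum_squares_le_sum_abs[of "dist x (fst p)" "dist y (snd p)"] by (simp add: dist_prod_def)
  then show "dist (x, y) p < d" using p assms by linarith
qed

lemma ball_subset_cball_Times:
  fixes x y :: real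
  shows "ball (x, y) r \<subseteq> cball x r \<times> cball y r"
proof
  fix p assume "p \<in> ball (x, y) r"
  then have "dist x (fst p) \<le> r" "dist y (snd p) \<le> r"
    using dist_fst_le[of "(x, y)" p] dist_snd_le[of "(x, y)" p] by auto
  then show "p \<in> cball x r \<times> cball y r" by (simp add: mem_Times_iff)
qed

lemma eventually_nhds_imp_cball_Times:
  fixes x y :: real
  assumes "eventually P (nhds (x, y))"
  obtains \<rho> where "0 < \<rho>" "\<And>v \<theta>. v \<in> cball x \<rho> \<Longrightarrow> \<theta> \<in> cball y \<rho> \<Longrightarrow> P (v, \<theta>)"
proof -
  obtain d where "0 < d" and d: "\<And>p. dist p (x, y) < d \<Longrightarrow> P p"
    using assms unfolding eventually_nhds_metric by blast
  have "cball x (d / 3) \<times> cball y (d / 3) \<subseteq> ball (x, y) d"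
    using \<open>0 < d\<close> by (intro cball_Times_cball_subset_ball) simp
  then show ?thesis
    using that[of "d / 3"] d \<open>0 < d\<close> by (force simp: dist_commute)
qed

lemma eventually_bounded_if_continuous_on:
  fixes f :: "real \<Rightarrow> real \<Rightarrow> real"
  assumes "continuous_on U (case_prod f)" "open U" "(x, y) \<in> U"
  shows "c < f x y \<Longrightarrow> \<forall>\<^sub>F p in nhds (x, y). c < case_prod f p"
    and "f x y < c \<Longrightarrow> \<forall>\<^sub>F p in nhds (x, y). case_prod f p < c"
proof -
  have "isCont (case_prod f) (x, y)"
    using assms continuous_on_eq_continuous_at by blast
  then have "(case_prod f \<longlongrightarrow> case_prod f (x, y)) (nhds (x, y))"
    by (simp only: isCont_def tendsto_at_iff_tendsto_nhds)
  then show "c < f x y \<Longrightarrow> \<forall>\<^sub>F p in nhds (x, y). c < case_prod f p"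
    and "f x y < c \<Longrightarrow> \<forall>\<^sub>F p in nhds (x, y). case_prod f p < c"
    by (simp_all add: order_tendstoD)
qed

lemma triangular_system_perturbation:
  fixes P1 P2 P1v P1t P2v P2t :: "real \<Rightarrow> real \<Rightarrow> real"
  assumes box: "\<And>v \<theta>. v \<in> cball v0 \<rho> \<Longrightarrow> \<theta> \<in> cball t0 \<rho> \<Longrightarrow>
      has_partials P1 P1v P1t v \<theta> \<and> has_partials P2 P2v P2t v \<theta> \<and>
      a < P1t v \<theta> \<and> - (\<epsilon> / 2) < P1v v \<theta> \<and> P1v v \<theta> < \<epsilon> / 2 \<and>
      - (5 * b / 2) < P2v v \<theta> \<and> P2v v \<theta> < - (3 * b / 2) \<and> - M < P2t v \<theta> \<and> P2t v \<theta> < M"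
    and "0 < a" "0 < b" "2 * \<epsilon> \<le> a" "2 * \<epsilon> \<le> b" "4 * (\<epsilon> * M) \<le> a * b"
    and Z: "\<bar>Z\<bar> < \<epsilon> / 2" "\<bar>Z\<bar> < b / 2"
  shows "triangular_system (\<lambda>v \<theta>. P1 v \<theta> - Z * (v - L)) (\<lambda>v \<theta>. P2 v \<theta> + Z * (v - L))
      (\<lambda>v \<theta>. P1v v \<theta> - Z) P1t (\<lambda>v \<theta>. P2v v \<theta> + Z) P2t v0 t0 \<rho> a b \<epsilon> M (3 * b)"
proof
  fix v \<theta> assume v\<theta>: "v \<in> cball v0 \<rho>" "\<theta> \<in> cball t0 \<rho>"
  then show "has_partials (\<lambda>v \<theta>. P1 v \<theta> - Z * (v - L)) (\<lambda>v \<theta>. P1v v \<theta> - Z) P1t v \<theta> \<and>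
      has_partials (\<lambda>v \<theta>. P2 v \<theta> + Z * (v - L)) (\<lambda>v \<theta>. P2v v \<theta> + Z) P2t v \<theta>"
    using box unfolding has_partials_def by (auto intro!: derivative_eq_intros)
  show "a \<le> P1t v \<theta> \<and> \<bar>P1v v \<theta> - Z\<bar> \<le> \<epsilon> \<and> P2v v \<theta> + Z \<le> - b \<and>
      \<bar>P2v v \<theta> + Z\<bar> \<le> 3 * b \<and> \<bar>P2t v \<theta>\<bar> \<le> M"
    using box[OF v\<theta>] Z by (auto simp: abs_le_iff abs_less_iff)
qed (use assms in auto)

locale perturbed_triangular_system =
  fixes P1 P2 P1v P1t P2v P2t :: "real \<Rightarrow> real \<Rightarrow> real"
    and L v0 t0 \<rho> a b \<epsilon> M N \<delta>0 :: real
  assumes perturbed: "\<And>Z. \<bar>Z\<bar> < \<delta>0 \<Longrightarrow> triangular_system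
      (\<lambda>v \<theta>. P1 v \<theta> - Z * (v - L)) (\<lambda>v \<theta>. P2 v \<theta> + Z * (v - L))
      (\<lambda>v \<theta>. P1v v \<theta> - Z) P1t (\<lambda>v \<theta>. P2v v \<theta> + Z) P2t v0 t0 \<rho> a b \<epsilon> M N"
    and rho_pos: "0 < \<rho>" and delta0_pos: "0 < \<delta>0" and L_less: "L < v0 - \<rho>"
    and base: "P1 v0 t0 = 0" "P2 v0 t0 = 0"
begin

lemma solution_unique:
  assumes "\<bar>Z\<bar> < \<delta>0"
    and "v1 \<in> cball v0 \<rho>" "v2 \<in> cball v0 \<rho>" "\<theta>1 \<in> cball t0 \<rho>" "\<theta>2 \<in> cball t0 \<rho>"
    and "P1 v1 \<theta>1 - Z * (v1 - L) = 0" "P2 v1 \<theta>1 + Z * (v1 - L) = 0"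
    and "P1 v2 \<theta>2 - Z * (v2 - L) = 0" "P2 v2 \<theta>2 + Z * (v2 - L) = 0"
  shows "v1 = v2 \<and> \<theta>1 = \<theta>2"
  using triangular_system.zero_unique[OF perturbed[OF assms(1)]] assms(2-) by blast

lemma solution_theta_strict_mono:
  assumes Z: "\<bar>Z2\<bar> < \<delta>0" "Z1 < Z2"
    and box: "v1 \<in> cball v0 \<rho>" "v2 \<in> cball v0 \<rho>" "\<theta>1 \<in> cball t0 \<rho>" "\<theta>2 \<in> cball t0 \<rho>"
    and zero1: "P1 v1 \<theta>1 - Z1 * (v1 - L) = 0" "P2 v1 \<theta>1 + Z1 * (v1 - L) = 0"
    and zero2: "P1 v2 \<theta>2 - Z2 * (v2 - L) = 0" "P2 v2 \<theta>2 + Z2 * (v2 - L) = 0"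
  shows "\<theta>1 < \<theta>2"
proof -
  have "L < v1"
    using L_less box(1) by (auto simp: dist_real_def)
  then have c_pos: "0 < (Z2 - Z1) * (v1 - L)"
    using Z(2) by simp
  have "(P1 v2 \<theta>2 - Z2 * (v2 - L)) - (P1 v1 \<theta>1 - Z2 * (v1 - L)) = (Z2 - Z1) * (v1 - L)"
      "(P2 v2 \<theta>2 + Z2 * (v2 - L)) - (P2 v1 \<theta>1 + Z2 * (v1 - L)) = - ((Z2 - Z1) * (v1 - L))"
    using zero1 zero2 by (simp_all add: algebra_simps)
  then show ?thesis
    using triangular_system.opposite_increments_trivial[OF perturbed[OF Z(1)] box] c_pos by force
qed

lemma solutions_exist:
  obtains \<delta> V \<Theta> where "0 < \<delta>" "\<delta> \<le> \<delta>0"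
    "\<And>Z. \<bar>Z\<bar> < \<delta> \<Longrightarrow> V Z \<in> cball v0 (\<rho> / 3) \<and> \<Theta> Z \<in> cball t0 (\<rho> / 3) \<and>
        P1 (V Z) (\<Theta> Z) - Z * (V Z - L) = 0 \<and> P2 (V Z) (\<Theta> Z) + Z * (V Z - L) = 0"
proof -
  interpret sys0: triangular_system "\<lambda>v \<theta>. P1 v \<theta> - 0 * (v - L)" "\<lambda>v \<theta>. P2 v \<theta> + 0 * (v - L)"
      "\<lambda>v \<theta>. P1v v \<theta> - 0" P1t "\<lambda>v \<theta>. P2v v \<theta> + 0" P2t v0 t0 \<rho> a b \<epsilon> M N
    using perturbed[of 0] delta0_pos by simp
  have "0 \<le> M"
    using sys0.bounds[of v0 t0] rho_pos abs_ge_zero order_trans by fastforce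
  define D0 s where "D0 = v0 - L" and "s = \<rho> / 3"
  have pos: "0 < s" "0 < 2 * D0" "0 < 4 * (a + M) * D0"
    using L_less rho_pos sys0.a_pos \<open>0 \<le> M\<close> by (simp_all add: D0_def s_def)
  \<comment> \<open>At the base point the perturbed residuals are \<open>\<mp>Z * D0\<close>; \<open>\<delta>\<close> makes them small enough
    for \<open>exists_zero\<close>.\<close>
  define \<delta> where "\<delta> = min \<delta>0 (min (a * s / (2 * D0)) (3 * (a * b * s) / (4 * (a + M) * D0)))"
  have "\<exists>v\<in>cball v0 s. \<exists>\<theta>\<in>cball t0 s. P1 v \<theta> - Z * (v - L) = 0 \<and> P2 v \<theta> + Z * (v - L) = 0"
    if "\<bar>Z\<bar> < \<delta>" for Z
  proof -
    have Z: "\<bar>Z\<bar> < \<delta>0" "\<bar>Z\<bar> * (2 * D0) < a * s" "\<bar>Z\<bar> * (4 * (a + M) * D0) < 3 * (a * b * s)"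
      using that pos by (simp_all add: \<delta>_def pos_less_divide_eq)
    interpret triangular_system "\<lambda>v \<theta>. P1 v \<theta> - Z * (v - L)" "\<lambda>v \<theta>. P2 v \<theta> + Z * (v - L)"
        "\<lambda>v \<theta>. P1v v \<theta> - Z" P1t "\<lambda>v \<theta>. P2v v \<theta> + Z" P2t v0 t0 \<rho> a b \<epsilon> M N
      using perturbed[OF Z(1)] .
    show ?thesis
    proof (rule exists_zero)
      show "0 < s" "s \<le> \<rho>" using pos by (simp_all add: s_def)
      show "2 * \<bar>P1 v0 t0 - Z * (v0 - L)\<bar> \<le> a * s"
        "4 * (a * \<bar>P2 v0 t0 + Z * (v0 - L)\<bar> + M * \<bar>P1 v0 t0 - Z * (v0 - L)\<bar>) \<le> 3 * (a * b * s)"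
        using Z pos by (simp_all add: base D0_def[symmetric] abs_mult algebra_simps)
    qed
  qed
  then obtain V \<Theta> where "\<And>Z. \<bar>Z\<bar> < \<delta> \<Longrightarrow> V Z \<in> cball v0 s \<and> \<Theta> Z \<in> cball t0 s \<and>
      P1 (V Z) (\<Theta> Z) - Z * (V Z - L) = 0 \<and> P2 (V Z) (\<Theta> Z) + Z * (V Z - L) = 0"
    by metis
  moreover have "0 < \<delta>" "\<delta> \<le> \<delta>0"
    using delta0_pos sys0.a_pos sys0.b_pos pos by (simp_all add: \<delta>_def)
  ultimately show ?thesis
    using that unfolding s_def by blast
qed

end

lemma perturbed_triangular_system_near_base:
  fixes P1 P2 P1v P1t P2v P2t :: "real \<Rightarrow> real \<Rightarrow> real"
  assumes U: "open U" "(v0, t0) \<in> U" and U_right: "U \<subseteq> {L<..} \<times> UNIV"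
    and C1: "has_continuous_partials_on P1 P1v P1t U" "has_continuous_partials_on P2 P2v P2t U"
    and base: "P1 v0 t0 = 0" "P2 v0 t0 = 0" "P1v v0 t0 = 0" "0 < P1t v0 t0" "P2v v0 t0 < 0"
  obtains \<rho> a b \<epsilon> M N \<delta>0 where "ball (v0, t0) \<rho> \<subseteq> U"
    "perturbed_triangular_system P1 P2 P1v P1t P2v P2t L v0 t0 \<rho> a b \<epsilon> M N \<delta>0"
proof -
  define a b M where "a = P1t v0 t0 / 2" and "b = - P2v v0 t0 / 2" and "M = \<bar>P2t v0 t0\<bar> + 1"
  define \<epsilon> where "\<epsilon> = min (min (a / 2) (b / 2)) (a * b / (4 * M))"
  have "0 < a" "0 < b" "0 < M"
    using base by (simp_all add: a_def b_def M_def add_nonneg_pos)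
  then have pos: "0 < a" "0 < b" "0 < M" "0 < \<epsilon>"
    by (simp_all add: \<epsilon>_def)
  have cont: "continuous_on U (case_prod P1t)" "continuous_on U (case_prod P1v)"
      "continuous_on U (case_prod P2v)" "continuous_on U (case_prod P2t)"
    using C1 by (simp_all add: has_continuous_partials_on_def)
  note near = eventually_bounded_if_continuous_on[OF _ U]
  have "\<forall>\<^sub>F p in nhds (v0, t0). p \<in> U \<and> a < case_prod P1t p \<and>
      - (\<epsilon> / 2) < case_prod P1v p \<and> case_prod P1v p < \<epsilon> / 2 \<and>
      - (5 * b / 2) < case_prod P2v p \<and> case_prod P2v p < - (3 * b / 2) \<and>
      - M < case_prod P2t p \<and> case_prod P2t p < M"
    using eventually_nhds_in_open[OF U] pos
    by (intro eventually_conj near[OF cont(1)] near[OF cont(2)] near[OF cont(3)] near[OF cont(4)])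
      (auto simp: a_def b_def M_def base)
  then obtain \<rho> where "0 < \<rho>" and box: "\<And>v \<theta>. v \<in> cball v0 \<rho> \<Longrightarrow> \<theta> \<in> cball t0 \<rho> \<Longrightarrow>
      (v, \<theta>) \<in> U \<and> a < P1t v \<theta> \<and> - (\<epsilon> / 2) < P1v v \<theta> \<and> P1v v \<theta> < \<epsilon> / 2 \<and>
      - (5 * b / 2) < P2v v \<theta> \<and> P2v v \<theta> < - (3 * b / 2) \<and> - M < P2t v \<theta> \<and> P2t v \<theta> < M"
    by (rule eventually_nhds_imp_cball_Times) simp
  have box_U: "cball v0 \<rho> \<times> cball t0 \<rho> \<subseteq> U"
    using box by auto
  have "L < v0 - \<rho>"
    using U_right box[of "v0 - \<rho>" t0] \<open>0 < \<rho>\<close> by (auto simp: dist_real_def)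
  have "\<epsilon> * M \<le> a * b / (4 * M) * M"
    using pos by (intro mult_right_mono) (auto simp: \<epsilon>_def)
  then have eps: "4 * (\<epsilon> * M) \<le> a * b" "2 * \<epsilon> \<le> a" "2 * \<epsilon> \<le> b"
    using pos by (auto simp: \<epsilon>_def)
  have partials: "has_partials P1 P1v P1t v \<theta> \<and> has_partials P2 P2v P2t v \<theta>"
    if "v \<in> cball v0 \<rho>" "\<theta> \<in> cball t0 \<rho>" for v \<theta>
    using box[OF that] C1 by (auto simp: has_continuous_partials_on_def)
  show ?thesis
  proof (rule that)
    show "ball (v0, t0) \<rho> \<subseteq> U"
      using ball_subset_cball_Times box_U by blast
    show "perturbed_triangular_system P1 P2 P1v P1t P2v P2t L v0 t0 \<rho> a b \<epsilon> M (3 * b)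
        (min (\<epsilon> / 2) (b / 2))"
    proof (rule perturbed_triangular_system.intro)
      show "triangular_system (\<lambda>v \<theta>. P1 v \<theta> - Z * (v - L)) (\<lambda>v \<theta>. P2 v \<theta> + Z * (v - L))
          (\<lambda>v \<theta>. P1v v \<theta> - Z) P1t (\<lambda>v \<theta>. P2v v \<theta> + Z) P2t v0 t0 \<rho> a b \<epsilon> M (3 * b)"
        if "\<bar>Z\<bar> < min (\<epsilon> / 2) (b / 2)" for Z
        using pos eps box partials that by (intro triangular_system_perturbation) auto
    qed (use \<open>0 < \<rho>\<close> \<open>L < v0 - \<rho>\<close> pos base(1,2) in auto)
  qed
qed

lemma perturbed_solution_branch:
  fixes P1 P2 P1v P1t P2v P2t :: "real \<Rightarrow> real \<Rightarrow> real"
  assumes U: "open U" "(v0, t0) \<in> U" and U_right: "U \<subseteq> {L<..} \<times> UNIV"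
    and C1: "has_continuous_partials_on P1 P1v P1t U" "has_continuous_partials_on P2 P2v P2t U"
    and base: "P1 v0 t0 = 0" "P2 v0 t0 = 0" "P1v v0 t0 = 0" "0 < P1t v0 t0" "P2v v0 t0 < 0"
  obtains \<delta> r V \<Theta> where "0 < \<delta>" "0 < r" "ball (v0, t0) r \<subseteq> U"
    "\<And>Z. Z \<in> {-\<delta><..<\<delta>} \<Longrightarrow> (V Z, \<Theta> Z) \<in> ball (v0, t0) r \<and>
        P1 (V Z) (\<Theta> Z) - Z * (V Z - L) = 0 \<and> P2 (V Z) (\<Theta> Z) + Z * (V Z - L) = 0"
    "\<And>Z v \<theta>. Z \<in> {-\<delta><..<\<delta>} \<Longrightarrow> (v, \<theta>) \<in> ball (v0, t0) r \<Longrightarrow>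
        P1 v \<theta> - Z * (v - L) = 0 \<Longrightarrow> P2 v \<theta> + Z * (v - L) = 0 \<Longrightarrow> v = V Z \<and> \<theta> = \<Theta> Z"
    "strict_mono_on {-\<delta><..<\<delta>} \<Theta>"
proof -
  obtain \<rho> a b \<epsilon> M N \<delta>0 where ball_U: "ball (v0, t0) \<rho> \<subseteq> U"
    and sys: "perturbed_triangular_system P1 P2 P1v P1t P2v P2t L v0 t0 \<rho> a b \<epsilon> M N \<delta>0"
    using perturbed_triangular_system_near_base[OF U U_right C1 base] by blast
  interpret perturbed_triangular_system P1 P2 P1v P1t P2v P2t L v0 t0 \<rho> a b \<epsilon> M N \<delta>0
    by (fact sys)
  obtain \<delta> V \<Theta> where "0 < \<delta>" "\<delta> \<le> \<delta>0" and solutions: "\<And>Z. \<bar>Z\<bar> < \<delta> \<Longrightarrow>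
      V Z \<in> cball v0 (\<rho> / 3) \<and> \<Theta> Z \<in> cball t0 (\<rho> / 3) \<and>
      P1 (V Z) (\<Theta> Z) - Z * (V Z - L) = 0 \<and> P2 (V Z) (\<Theta> Z) + Z * (V Z - L) = 0"
    using solutions_exist by blast
  have small_Z: "\<bar>Z\<bar> < \<delta>" if "Z \<in> {-\<delta><..<\<delta>}" for Z
    using that by (simp add: abs_less_iff)
  note sol = solutions[OF small_Z]
  have small_box: "cball v0 (\<rho> / 3) \<times> cball t0 (\<rho> / 3) \<subseteq> ball (v0, t0) \<rho>"
    using rho_pos by (intro cball_Times_cball_subset_ball) simp
  note ball_box = ball_subset_cball_Times[of v0 t0 \<rho>]
  have sol_ball: "(V Z, \<Theta> Z) \<in> ball (v0, t0) \<rho>" if "Z \<in> {-\<delta><..<\<delta>}" for Z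
    using sol[OF that] small_box by blast
  have sol_box: "V Z \<in> cball v0 \<rho>" "\<Theta> Z \<in> cball t0 \<rho>" if "Z \<in> {-\<delta><..<\<delta>}" for Z
    using sol_ball[OF that] ball_box by blast+
  have unique: "v = V Z \<and> \<theta> = \<Theta> Z"
    if Z: "Z \<in> {-\<delta><..<\<delta>}" and "(v, \<theta>) \<in> ball (v0, t0) \<rho>"
      and "P1 v \<theta> - Z * (v - L) = 0" "P2 v \<theta> + Z * (v - L) = 0" for Z v \<theta>
  proof -
    have "v \<in> cball v0 \<rho>" "\<theta> \<in> cball t0 \<rho>"
      using that(2) ball_box by auto
    then show ?thesis
      using solution_unique[OF _ _ sol_box(1)[OF Z] _ sol_box(2)[OF Z]] small_Z[OF Z] \<open>\<delta> \<le> \<delta>0\<close>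
        that(3,4) sol[OF Z] by force
  qed
  have "strict_mono_on {-\<delta><..<\<delta>} \<Theta>"
  proof (rule strict_mono_onI)
    fix Z1 Z2 assume Z12: "Z1 \<in> {-\<delta><..<\<delta>}" "Z2 \<in> {-\<delta><..<\<delta>}" "Z1 < Z2"
    show "\<Theta> Z1 < \<Theta> Z2"
      using solution_theta_strict_mono[OF _ Z12(3) sol_box(1)[OF Z12(1)] sol_box(1)[OF Z12(2)]
          sol_box(2)[OF Z12(1)] sol_box(2)[OF Z12(2)]] small_Z[OF Z12(2)] \<open>\<delta> \<le> \<delta>0\<close>
        sol[OF Z12(1)] sol[OF Z12(2)] by force
  qed
  with that[of \<delta> \<rho> V \<Theta>] show ?thesis
    using \<open>0 < \<delta>\<close> rho_pos ball_U sol sol_ball unique by blast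
qed

section \<open>Symmetry of mixed partial derivatives\<close>

lemma C1_on_has_partials:
  assumes "C1_on f S" "(v, \<theta>) \<in> S"
  shows "has_partials f (dv f) (dth f) v \<theta>"
  using assms unfolding C1_on_def has_partials_def dv_def dth_def
  by (simp add: DERIV_deriv_iff_real_differentiable)

lemma mixed_difference_mvt:
  fixes f fx fxy :: "real \<Rightarrow> real \<Rightarrow> real"
  assumes "0 < h"
    and deriv: "\<And>x y. x \<in> {x0..x0 + h} \<Longrightarrow> y \<in> {y0..y0 + h} \<Longrightarrow>
      ((\<lambda>x. f x y) has_real_derivative fx x y) (at x) \<and> ((\<lambda>y. fx x y) has_real_derivative fxy x y) (at y)"
  shows "\<exists>\<xi>\<in>{x0..x0 + h}. \<exists>\<eta>\<in>{y0..y0 + h}.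
           f (x0 + h) (y0 + h) - f (x0 + h) y0 - f x0 (y0 + h) + f x0 y0 = h\<^sup>2 * fxy \<xi> \<eta>"
proof -
  have ends: "y0 \<in> {y0..y0 + h}" "y0 + h \<in> {y0..y0 + h}"
    using \<open>0 < h\<close> by auto
  have x0_less: "x0 < x0 + h"
    using \<open>0 < h\<close> by simp
  have "((\<lambda>x. f x (y0 + h) - f x y0) has_real_derivative fx x (y0 + h) - fx x y0) (at x)"
    if "x0 \<le> x" "x \<le> x0 + h" for x
    using deriv[of x] ends that by (auto intro: DERIV_diff)
  from MVT2[OF x0_less this] obtain \<xi> where \<xi>: "x0 < \<xi>" "\<xi> < x0 + h"
    "(f (x0 + h) (y0 + h) - f (x0 + h) y0) - (f x0 (y0 + h) - f x0 y0) = h * (fx \<xi> (y0 + h) - fx \<xi> y0)"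
    by auto
  obtain \<eta> where \<eta>: "y0 < \<eta>" "\<eta> < y0 + h" "fx \<xi> (y0 + h) - fx \<xi> y0 = h * fxy \<xi> \<eta>"
    using MVT2[of y0 "y0 + h" "fx \<xi>" "fxy \<xi>"] deriv \<xi>(1,2) \<open>0 < h\<close> by auto
  show ?thesis
    using \<xi> \<eta> by (intro bexI[of _ \<xi>] bexI[of _ \<eta>]) (auto simp: power2_eq_square algebra_simps)
qed

lemma C2_on_mixed_partials_agree_in_square:
  assumes "C2_on f S" "0 < \<rho>" "cball x0 \<rho> \<times> cball y0 \<rho> \<subseteq> S"
  obtains \<xi> \<eta> \<xi>' \<eta>' where "\<xi> \<in> cball x0 \<rho>" "\<eta> \<in> cball y0 \<rho>" "\<xi>' \<in> cball x0 \<rho>" "\<eta>' \<in> cball y0 \<rho>"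
    "dth (dv f) \<xi> \<eta> = dv (dth f) \<xi>' \<eta>'"
proof -
  have C1: "C1_on f S" "C1_on (dv f) S" "C1_on (dth f) S"
    using assms(1) by (simp_all add: C2_on_def)
  have rect: "x \<in> cball x0 \<rho>" "y \<in> cball y0 \<rho>" "(x, y) \<in> S"
    if "x \<in> {x0..x0 + \<rho>}" "y \<in> {y0..y0 + \<rho>}" for x y
    using that assms(3) by (auto simp: dist_real_def)
  have "\<exists>\<xi>\<in>{x0..x0 + \<rho>}. \<exists>\<eta>\<in>{y0..y0 + \<rho>}.
      f (x0 + \<rho>) (y0 + \<rho>) - f (x0 + \<rho>) y0 - f x0 (y0 + \<rho>) + f x0 y0 = \<rho>\<^sup>2 * dth (dv f) \<xi> \<eta>"
    using rect C1_on_has_partials[OF C1(1)] C1_on_has_partials[OF C1(2)]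
    by (intro mixed_difference_mvt[where fx = "dv f"] \<open>0 < \<rho>\<close>) (auto simp: has_partials_def)
  then obtain \<xi> \<eta> where \<xi>\<eta>: "\<xi> \<in> {x0..x0 + \<rho>}" "\<eta> \<in> {y0..y0 + \<rho>}"
      "f (x0 + \<rho>) (y0 + \<rho>) - f (x0 + \<rho>) y0 - f x0 (y0 + \<rho>) + f x0 y0 = \<rho>\<^sup>2 * dth (dv f) \<xi> \<eta>"
    by blast
  have "\<exists>\<eta>\<in>{y0..y0 + \<rho>}. \<exists>\<xi>\<in>{x0..x0 + \<rho>}.
      f (x0 + \<rho>) (y0 + \<rho>) - f x0 (y0 + \<rho>) - f (x0 + \<rho>) y0 + f x0 y0 = \<rho>\<^sup>2 * dv (dth f) \<xi> \<eta>"
    using rect C1_on_has_partials[OF C1(1)] C1_on_has_partials[OF C1(3)]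
    by (intro mixed_difference_mvt[where f = "\<lambda>y x. f x y" and fx = "\<lambda>y x. dth f x y"] \<open>0 < \<rho>\<close>)
      (auto simp: has_partials_def)
  then obtain \<xi>' \<eta>' where \<xi>'\<eta>': "\<xi>' \<in> {x0..x0 + \<rho>}" "\<eta>' \<in> {y0..y0 + \<rho>}"
      "f (x0 + \<rho>) (y0 + \<rho>) - f x0 (y0 + \<rho>) - f (x0 + \<rho>) y0 + f x0 y0 = \<rho>\<^sup>2 * dv (dth f) \<xi>' \<eta>'"
    by blast
  have "\<rho>\<^sup>2 * dth (dv f) \<xi> \<eta> = \<rho>\<^sup>2 * dv (dth f) \<xi>' \<eta>'"
    using \<xi>\<eta>(3) \<xi>'\<eta>'(3) by linarith
  then have "dth (dv f) \<xi> \<eta> = dv (dth f) \<xi>' \<eta>'"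
    using \<open>0 < \<rho>\<close> by simp
  then show ?thesis
    using that rect \<xi>\<eta>(1,2) \<xi>'\<eta>'(1,2) by blast
qed

lemma C2_on_mixed_partials_eq:
  assumes "C2_on f S" "open S" "(x0, y0) \<in> S"
  shows "dth (dv f) x0 y0 = dv (dth f) x0 y0"
proof -
  have cont: "continuous_on S (case_prod (dth (dv f)))" "continuous_on S (case_prod (dv (dth f)))"
    using assms(1) by (simp_all add: C2_on_def C1_on_def)
  note near = eventually_bounded_if_continuous_on[OF _ assms(2,3)]
  have "\<bar>dth (dv f) x0 y0 - dv (dth f) x0 y0\<bar> \<le> 0 + 2 * e" if "0 < e" for e
  proof -
    have "\<forall>\<^sub>F p in nhds (x0, y0). p \<in> S \<and>
        dth (dv f) x0 y0 - e < case_prod (dth (dv f)) p \<and> case_prod (dth (dv f)) p < dth (dv f) x0 y0 + e \<and>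
        dv (dth f) x0 y0 - e < case_prod (dv (dth f)) p \<and> case_prod (dv (dth f)) p < dv (dth f) x0 y0 + e"
      using eventually_nhds_in_open[OF assms(2,3)] \<open>0 < e\<close>
      by (intro eventually_conj near[OF cont(1)] near[OF cont(2)]) auto
    then obtain \<rho> where "0 < \<rho>" and near_box: "\<And>x y. x \<in> cball x0 \<rho> \<Longrightarrow> y \<in> cball y0 \<rho> \<Longrightarrow>
        (x, y) \<in> S \<and>
        dth (dv f) x0 y0 - e < dth (dv f) x y \<and> dth (dv f) x y < dth (dv f) x0 y0 + e \<and>
        dv (dth f) x0 y0 - e < dv (dth f) x y \<and> dv (dth f) x y < dv (dth f) x0 y0 + e"
      by (rule eventually_nhds_imp_cball_Times) simp
    moreover have "cball x0 \<rho> \<times> cball y0 \<rho> \<subseteq> S"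
      using near_box by blast
    ultimately obtain \<xi> \<eta> \<xi>' \<eta>' where "\<xi> \<in> cball x0 \<rho>" "\<eta> \<in> cball y0 \<rho>" "\<xi>' \<in> cball x0 \<rho>"
        "\<eta>' \<in> cball y0 \<rho>" "dth (dv f) \<xi> \<eta> = dv (dth f) \<xi>' \<eta>'"
      using C2_on_mixed_partials_agree_in_square[OF assms(1)] by blast
    then show ?thesis
      using near_box[of \<xi> \<eta>] near_box[of \<xi>' \<eta>'] unfolding abs_le_iff by linarith
  qed
  note close = this
  have "\<bar>dth (dv f) x0 y0 - dv (dth f) x0 y0\<bar> \<le> 0 + e" if "0 < e" for e
    using close[of "e / 2"] that by simp
  then have "\<bar>dth (dv f) x0 y0 - dv (dth f) x0 y0\<bar> \<le> 0"
    by (rule field_le_epsilon)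
  then show ?thesis
    by simp
qed

section \<open>The interface equations\<close>

text \<open>The pressure of the bitangent construction: minus the slope of the chord from
  \<open>(vl, \<psi>l vl \<theta>)\<close> to \<open>(v, \<psi>g v \<theta>)\<close>.\<close>

definition chord_pres :: "(real \<Rightarrow> real \<Rightarrow> real) \<Rightarrow> (real \<Rightarrow> real \<Rightarrow> real) \<Rightarrow> real \<Rightarrow> real \<Rightarrow> real \<Rightarrow> real" where
  "chord_pres \<psi>l \<psi>g vl v \<theta> = (\<psi>l vl \<theta> - \<psi>g v \<theta>) / (v - vl)"

lemma chord_pres_partials:
  assumes "has_partials \<psi>l (dv \<psi>l) (dth \<psi>l) vl \<theta>" "has_partials \<psi>g (dv \<psi>g) (dth \<psi>g) v \<theta>" "v \<noteq> vl"
  shows "has_partials (chord_pres \<psi>l \<psi>g vl)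
           (\<lambda>v \<theta>. (pres \<psi>g v \<theta> - chord_pres \<psi>l \<psi>g vl v \<theta>) / (v - vl))
           (\<lambda>v \<theta>. (entr \<psi>g v \<theta> - entr \<psi>l vl \<theta>) / (v - vl)) v \<theta>"
proof -
  have "((\<lambda>y. (\<psi>l vl y - \<psi>g v y) / (v - vl)) has_real_derivative
      (dth \<psi>l vl \<theta> - dth \<psi>g v \<theta>) / (v - vl)) (at \<theta>)"
    using assms(1,2) unfolding has_partials_def by (intro DERIV_cdivide DERIV_diff) auto
  moreover have "((\<lambda>x. (\<psi>l vl \<theta> - \<psi>g x \<theta>) / (x - vl)) has_real_derivative
      (- dv \<psi>g v \<theta> - (\<psi>l vl \<theta> - \<psi>g v \<theta>) / (v - vl)) / (v - vl)) (at v)"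
    using assms unfolding has_partials_def
    by (auto intro!: derivative_eq_intros simp: field_simps power2_eq_square)
  ultimately show ?thesis
    unfolding has_partials_def chord_pres_def pres_def entr_def by (simp add: diff_divide_distrib)
qed

lemma phase_residuals_continuous_partials:
  assumes C2: "C2_on \<psi>l (phase_dom \<alpha>)" "C2_on \<psi>g (phase_dom \<alpha>)" and "\<alpha> < vl"
  shows "has_continuous_partials_on (\<lambda>v \<theta>. pres \<psi>l vl \<theta> - chord_pres \<psi>l \<psi>g vl v \<theta>)
      (\<lambda>v \<theta>. (chord_pres \<psi>l \<psi>g vl v \<theta> - pres \<psi>g v \<theta>) / (v - vl))
      (\<lambda>v \<theta>. - dth (dv \<psi>l) vl \<theta> + (entr \<psi>l vl \<theta> - entr \<psi>g v \<theta>) / (v - vl)) ({vl<..} \<times> {0<..})"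
      (is "has_continuous_partials_on ?P1 ?P1v ?P1t ?U")
    and "has_continuous_partials_on (\<lambda>v \<theta>. pres \<psi>g v \<theta> - chord_pres \<psi>l \<psi>g vl v \<theta>)
      (\<lambda>v \<theta>. - dv (dv \<psi>g) v \<theta> + (chord_pres \<psi>l \<psi>g vl v \<theta> - pres \<psi>g v \<theta>) / (v - vl))
      (\<lambda>v \<theta>. - dth (dv \<psi>g) v \<theta> + (entr \<psi>l vl \<theta> - entr \<psi>g v \<theta>) / (v - vl)) ({vl<..} \<times> {0<..})"
      (is "has_continuous_partials_on ?P2 ?P2v ?P2t _")
proof -
  define S where "S = phase_dom \<alpha>"
  have in_S: "(v, \<theta>) \<in> S" "(vl, \<theta>) \<in> S" if "(v, \<theta>) \<in> ?U" for v \<theta>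
    using that \<open>\<alpha> < vl\<close> by (auto simp: S_def phase_dom_def)
  have C1: "C1_on \<psi>l S" "C1_on (dv \<psi>l) S" "C1_on (dth \<psi>l) S" "C1_on \<psi>g S" "C1_on (dv \<psi>g) S" "C1_on (dth \<psi>g) S"
    using C2 by (simp_all add: C2_on_def S_def)
  have partials: "has_partials ?P1 ?P1v ?P1t v \<theta> \<and> has_partials ?P2 ?P2v ?P2t v \<theta>" if "(v, \<theta>) \<in> ?U" for v \<theta>
  proof -
    have "v \<noteq> vl" using that by simp
    have "has_partials (chord_pres \<psi>l \<psi>g vl)
        (\<lambda>v \<theta>. (pres \<psi>g v \<theta> - chord_pres \<psi>l \<psi>g vl v \<theta>) / (v - vl))
        (\<lambda>v \<theta>. (entr \<psi>g v \<theta> - entr \<psi>l vl \<theta>) / (v - vl)) v \<theta>"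
      by (rule chord_pres_partials[OF C1_on_has_partials[OF C1(1) in_S(2)[OF that]]
            C1_on_has_partials[OF C1(4) in_S(1)[OF that]] \<open>v \<noteq> vl\<close>])
    moreover note C1_on_has_partials[OF C1(2) in_S(2)[OF that]] C1_on_has_partials[OF C1(5) in_S(1)[OF that]]
    ultimately show ?thesis
      unfolding has_partials_def pres_def
      by (auto intro!: derivative_eq_intros simp: diff_divide_distrib add_divide_distrib)
  qed
  have pair_S: "(fst p, snd p) \<in> S" "(vl, snd p) \<in> S" if "p \<in> ?U" for p
    using in_S[of "fst p" "snd p"] that by simp_all
  have gas: "continuous_on ?U (\<lambda>p. g (fst p) (snd p))" if "continuous_on S (case_prod g)" for g
    using continuous_on_subset[OF that, of ?U] pair_S by (force simp: case_prod_unfold)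
  have liquid: "continuous_on ?U (\<lambda>p. g vl (snd p))" if "continuous_on S (case_prod g)" for g
  proof (rule continuous_on_compose2[OF that, of ?U "\<lambda>p. (vl, snd p)", simplified])
    show "continuous_on ?U (\<lambda>p. (vl, snd p))" by (intro continuous_intros)
    show "(\<lambda>p. (vl, snd p)) ` ?U \<subseteq> S" using pair_S by auto
  qed
  have "\<forall>p\<in>?U. fst p - vl \<noteq> 0"
    by auto
  have cont_S: "continuous_on S (case_prod f)" "continuous_on S (case_prod (dv f))"
      "continuous_on S (case_prod (dth f))" if "C1_on f S" for f
    using that by (simp_all add: C1_on_def)
  note cont = liquid[OF cont_S(1)[OF C1(1)]] liquid[OF cont_S(3)[OF C1(1)]]
    liquid[OF cont_S(3)[OF C1(2)]] gas[OF cont_S(1)[OF C1(4)]] gas[OF cont_S(2)[OF C1(4)]]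
    gas[OF cont_S(3)[OF C1(4)]] gas[OF cont_S(2)[OF C1(5)]] gas[OF cont_S(3)[OF C1(5)]]
  show "has_continuous_partials_on ?P1 ?P1v ?P1t ?U" "has_continuous_partials_on ?P2 ?P2v ?P2t ?U"
    unfolding has_continuous_partials_on_def using partials
    by (auto simp: case_prod_unfold chord_pres_def pres_def entr_def intro!: continuous_intros cont
        \<open>\<forall>p\<in>?U. fst p - vl \<noteq> 0\<close>)
qed

lemma dv_pres_eq:
  assumes "C1_on (dv \<psi>) S" "(v, \<theta>) \<in> S"
  shows "dv (pres \<psi>) v \<theta> = - dv (dv \<psi>) v \<theta>"
  using C1_on_has_partials[OF assms] unfolding has_partials_def dv_def[of "pres \<psi>"] pres_def
  by (intro DERIV_imp_deriv DERIV_minus) simp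

lemma dv_entr_eq:
  assumes "C2_on \<psi> S" "open S" "(v, \<theta>) \<in> S"
  shows "dv (entr \<psi>) v \<theta> = - dth (dv \<psi>) v \<theta>"
proof -
  have "C1_on (dth \<psi>) S"
    using assms(1) by (simp add: C2_on_def)
  then have "dv (entr \<psi>) v \<theta> = - dv (dth \<psi>) v \<theta>"
    using C1_on_has_partials[OF _ assms(3)] unfolding has_partials_def dv_def[of "entr \<psi>"] entr_def
    by (intro DERIV_imp_deriv DERIV_minus) simp
  then show ?thesis
    using C2_on_mixed_partials_eq[OF assms] by simp
qed

lemma f1_eq: "f1 \<psi>l \<psi>g vl \<theta> v Z = (pres \<psi>l vl \<theta> - chord_pres \<psi>l \<psi>g vl v \<theta>) - Z * (v - vl)"
  by (simp add: f1_def chord_pres_def)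

lemma f2_eq: "f2 \<psi>l \<psi>g vl \<theta> v Z = (pres \<psi>g v \<theta> - chord_pres \<psi>l \<psi>g vl v \<theta>) + Z * (v - vl)"
  by (simp add: f2_def chord_pres_def)

lemma saturated_residuals:
  assumes C2: "C2_on \<psi>l (phase_dom \<alpha>)" "C2_on \<psi>g (phase_dom \<alpha>)"
    and "\<alpha> < vl" "vl < vg" "0 < \<theta>b"
    and "pres \<psi>l vl \<theta>b = pres \<psi>g vg \<theta>b" "pres \<psi>g vg \<theta>b = (\<psi>l vl \<theta>b - \<psi>g vg \<theta>b) / (vg - vl)"
    and "dv (entr \<psi>l) vl \<theta>b > (entr \<psi>g vg \<theta>b - entr \<psi>l vl \<theta>b) / (vg - vl)"
    and "dv (pres \<psi>g) vg \<theta>b < 0"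
  shows "pres \<psi>l vl \<theta>b - chord_pres \<psi>l \<psi>g vl vg \<theta>b = 0"
    "pres \<psi>g vg \<theta>b - chord_pres \<psi>l \<psi>g vl vg \<theta>b = 0"
    "(chord_pres \<psi>l \<psi>g vl vg \<theta>b - pres \<psi>g vg \<theta>b) / (vg - vl) = 0"
    "0 < - dth (dv \<psi>l) vl \<theta>b + (entr \<psi>l vl \<theta>b - entr \<psi>g vg \<theta>b) / (vg - vl)"
    "- dv (dv \<psi>g) vg \<theta>b + (chord_pres \<psi>l \<psi>g vl vg \<theta>b - pres \<psi>g vg \<theta>b) / (vg - vl) < 0"
proof -
  show residuals: "pres \<psi>l vl \<theta>b - chord_pres \<psi>l \<psi>g vl vg \<theta>b = 0"
    "pres \<psi>g vg \<theta>b - chord_pres \<psi>l \<psi>g vl vg \<theta>b = 0"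
    "(chord_pres \<psi>l \<psi>g vl vg \<theta>b - pres \<psi>g vg \<theta>b) / (vg - vl) = 0"
    using assms(6,7) by (simp_all add: chord_pres_def)
  have "(vl, \<theta>b) \<in> phase_dom \<alpha>" "(vg, \<theta>b) \<in> phase_dom \<alpha>" "open (phase_dom \<alpha>)"
    using assms(3-5) by (auto simp: phase_dom_def open_Times)
  moreover have "C1_on (dv \<psi>g) (phase_dom \<alpha>)"
    using C2(2) by (simp add: C2_on_def)
  ultimately have "dv (entr \<psi>l) vl \<theta>b = - dth (dv \<psi>l) vl \<theta>b" "dv (pres \<psi>g) vg \<theta>b = - dv (dv \<psi>g) vg \<theta>b"
    using dv_entr_eq[OF C2(1)] dv_pres_eq by blast+
  then show "0 < - dth (dv \<psi>l) vl \<theta>b + (entr \<psi>l vl \<theta>b - entr \<psi>g vg \<theta>b) / (vg - vl)"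
    "- dv (dv \<psi>g) vg \<theta>b + (chord_pres \<psi>l \<psi>g vl vg \<theta>b - pres \<psi>g vg \<theta>b) / (vg - vl) < 0"
    using assms(8,9) residuals(2) by (simp_all add: diff_divide_distrib)
qed

theorem theorem3p2:
  fixes \<alpha> \<rho>l \<theta>b vg :: real and \<psi>l \<psi>g :: "real \<Rightarrow> real \<Rightarrow> real"
  assumes "\<alpha> > 0"
    and "C2_on \<psi>l (phase_dom \<alpha>)" and "C2_on \<psi>g (phase_dom \<alpha>)"
    and "\<rho>l > 0" and "\<theta>b > 0"
    and "\<alpha> < 1 / \<rho>l" and "1 / \<rho>l < vg"
    and "pres \<psi>l (1 / \<rho>l) \<theta>b = pres \<psi>g vg \<theta>b"
    and "pres \<psi>g vg \<theta>b = (\<psi>l (1 / \<rho>l) \<theta>b - \<psi>g vg \<theta>b) / (vg - 1 / \<rho>l)"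
    and "dv (entr \<psi>l) (1 / \<rho>l) \<theta>b > (entr \<psi>g vg \<theta>b - entr \<psi>l (1 / \<rho>l) \<theta>b) / (vg - 1 / \<rho>l)"
    and "dv (pres \<psi>g) vg \<theta>b < 0"
  shows "\<exists>\<delta>>0. \<exists>r>0. \<exists>V \<Theta> :: real \<Rightarrow> real.
     (\<forall>Z \<in> {-\<delta><..<\<delta>}.
        (V Z, \<Theta> Z) \<in> ball (vg, \<theta>b) r \<and> \<alpha> < V Z \<and> 0 < \<Theta> Z \<and> V Z \<noteq> 1 / \<rho>l \<and>
        f1 \<psi>l \<psi>g (1 / \<rho>l) (\<Theta> Z) (V Z) Z = 0 \<and> f2 \<psi>l \<psi>g (1 / \<rho>l) (\<Theta> Z) (V Z) Z = 0 \<and>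
        (\<forall>v \<theta>. (v, \<theta>) \<in> ball (vg, \<theta>b) r \<and> \<alpha> < v \<and> 0 < \<theta> \<and> v \<noteq> 1 / \<rho>l \<and>
               f1 \<psi>l \<psi>g (1 / \<rho>l) \<theta> v Z = 0 \<and> f2 \<psi>l \<psi>g (1 / \<rho>l) \<theta> v Z = 0
               \<longrightarrow> v = V Z \<and> \<theta> = \<Theta> Z)) \<and>
     strict_mono_on {-\<delta><..<\<delta>} \<Theta>"
proof -
  define vl where "vl = 1 / \<rho>l"
  have "\<alpha> < vl" "vl < vg"
    using assms(6,7) by (simp_all add: vl_def)
  have U: "open ({vl<..} \<times> {0<..} :: (real \<times> real) set)" "(vg, \<theta>b) \<in> {vl<..} \<times> {0<..}"
      "{vl<..} \<times> {0<..} \<subseteq> {vl<..} \<times> (UNIV :: real set)"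
    using \<open>vl < vg\<close> assms(5) by (auto simp: open_Times)
  note base = saturated_residuals[OF assms(2,3) \<open>\<alpha> < vl\<close> \<open>vl < vg\<close> assms(5) assms(8-11)[folded vl_def]]
  obtain \<delta> r V \<Theta> where "0 < \<delta>" "0 < r" and ball_U: "ball (vg, \<theta>b) r \<subseteq> {vl<..} \<times> {0<..}"
    and sol: "\<And>Z. Z \<in> {-\<delta><..<\<delta>} \<Longrightarrow> (V Z, \<Theta> Z) \<in> ball (vg, \<theta>b) r \<and>
        f1 \<psi>l \<psi>g vl (\<Theta> Z) (V Z) Z = 0 \<and> f2 \<psi>l \<psi>g vl (\<Theta> Z) (V Z) Z = 0"
    and unique: "\<And>Z v \<theta>. Z \<in> {-\<delta><..<\<delta>} \<Longrightarrow> (v, \<theta>) \<in> ball (vg, \<theta>b) r \<Longrightarrow>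
        f1 \<psi>l \<psi>g vl \<theta> v Z = 0 \<Longrightarrow> f2 \<psi>l \<psi>g vl \<theta> v Z = 0 \<Longrightarrow> v = V Z \<and> \<theta> = \<Theta> Z"
    and mono: "strict_mono_on {-\<delta><..<\<delta>} \<Theta>"
    unfolding f1_eq f2_eq
    by (rule perturbed_solution_branch[OF U phase_residuals_continuous_partials[OF assms(2,3) \<open>\<alpha> < vl\<close>],
          OF base])
      blast
  have domain: "\<alpha> < v \<and> 0 < \<theta> \<and> v \<noteq> vl" if "(v, \<theta>) \<in> ball (vg, \<theta>b) r" for v \<theta>
    using subsetD[OF ball_U that] \<open>\<alpha> < vl\<close> by simp
  have "\<forall>Z\<in>{-\<delta><..<\<delta>}. (V Z, \<Theta> Z) \<in> ball (vg, \<theta>b) r \<and> \<alpha> < V Z \<and> 0 < \<Theta> Z \<and> V Z \<noteq> vl \<and>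
      f1 \<psi>l \<psi>g vl (\<Theta> Z) (V Z) Z = 0 \<and> f2 \<psi>l \<psi>g vl (\<Theta> Z) (V Z) Z = 0 \<and>
      (\<forall>v \<theta>. (v, \<theta>) \<in> ball (vg, \<theta>b) r \<and> \<alpha> < v \<and> 0 < \<theta> \<and> v \<noteq> vl \<and>
        f1 \<psi>l \<psi>g vl \<theta> v Z = 0 \<and> f2 \<psi>l \<psi>g vl \<theta> v Z = 0 \<longrightarrow> v = V Z \<and> \<theta> = \<Theta> Z)"
    by (intro ballI conjI allI impI) (use sol domain unique in blast)+
  with \<open>0 < \<delta>\<close> \<open>0 < r\<close> mono show ?thesis
    unfolding vl_def[symmetric] by blast
qed

end
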